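(* Consider the following game with identity groups. There are $N$ agents, parameters $A>0$, $M>0$, $G\in(1/N,1)$, initial elite size $E^0<1/G$, altruism parameter $\alpha\in(0,1)$, and $f:[0,\infty)\to[0,\infty)$ strictly increasing and concave with $f(0)=0$, $Af'(0)>1$, $Af'(\infty)<1$. Suppose all initial elite agents belong to a single group $j$ (i.e. $p_j^{elite}=1$). Then an increase in the population share $p_j^{tot}$ of group $j$ can cause the elite to switch to providing public goods: there exist parameter values and shares $p<p'$ such that in equilibrium the elite does not provide public goods when $p_j^{tot}=p$, but does provide public goods when $p_j^{tot}=p'$.
   Context: Base model. There are $N$ agents; each is either elite (has property rights) or disenfranchised. Initially $E^0$ agents are elite. Each agent $i$ is endowed with raw materials $M$ and chooses investment $I_i\ge 0$ producing $Af(I_i)$ finished goods; resources $R_i=Af(I_i)+M$. Timing: (Stage 1) a uniformly random initial elite agent chooses $E\in[E^0,N]$ (fractional allowed); $E-E^0$ uniformly random initially disenfranchised agents become elite. (Stage 2) all agents simultaneously choose $I_i\ge0$. (Stage 3) a uniformly random elite agent chooses $V\in\{S,P\}$: under $S$ the total resources $X$ of the disenfranchised are split equally among the $E$ elite; under $P$, $X$ is converted to $G X$ units of a public good benefiting every agent equally; indifference resolved in favour of $P$. Material payoffs: disenfranchised $\Pi_d=GX-I_d$ under $P$ and $\Pi_d=-I_d$ under $S$; elite $\Pi_e=GX+R_e-I_e$ under $P$ and $\Pi_e=X/E+R_e-I_e$ under $S$. Identity extension: each agent belongs to an exogenous group $j\in J$; group $j$ makes up fraction $p_j^{tot}$ of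 the population and fraction $p_j^{elite}$ of the initial elite; $q_j=\frac{p_j^{elite}}{p_j^{tot}}\cdot\frac{E}{N}$ is the fraction of group-$j$ agents in the elite. An agent of type $i\in\{d,e\}$ in group $j$ has utility $U_i^j=\Pi_i+\alpha\big(q_j\Pi_e+(1-q_j)\Pi_d\big)$. Equilibrium means pure-strategy subgame perfect Nash equilibrium. *)

theory Defs
  imports "HOL-Analysis.Analysis"
begin

text \<open>All agents of the same type and group are treated symmetrically; agent counts
  may be fractional (the elite size E is a real number in [E0, N]).\<close>

datatype policy = S | P

record params =
  nN    :: nat
  aA    :: real
  mM    :: real
  gG    :: real
  eE0   :: nat
  alph  :: real
  fprod :: "real \<Rightarrow> real"

definition valid_params :: "params \<Rightarrow> bool" where
  "valid_params pr \<longleftrightarrow>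
     aA pr > 0 \<and> mM pr > 0 \<and>
     1 / real (nN pr) < gG pr \<and> gG pr < 1 \<and>
     1 \<le> eE0 pr \<and> real (eE0 pr) < 1 / gG pr \<and>
     0 < alph pr \<and> alph pr < 1 \<and>
     fprod pr 0 = 0 \<and>
     (\<forall>x\<ge>0. fprod pr x \<ge> 0) \<and>
     (\<forall>x y. 0 \<le> x \<longrightarrow> x < y \<longrightarrow> fprod pr x < fprod pr y) \<and>
     concave_on {0..} (fprod pr) \<and>
     (\<exists>f'. (\<forall>x\<ge>0. (fprod pr has_real_derivative f' x) (at x within {0..})) \<and>
           aA pr * f' 0 > 1 \<and>
           (\<exists>L. (f' \<longlongrightarrow> L) at_top \<and> aA pr * L < 1))"

definition res :: "params \<Rightarrow> real \<Rightarrow> real" where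
  "res pr I = aA pr * fprod pr I + mM pr"

text \<open>q_j = (p_j^elite / p_j^tot) * (E / N), here with p_j^elite = 1 and p_j^tot = p.\<close>
definition qj :: "params \<Rightarrow> real \<Rightarrow> real \<Rightarrow> real" where
  "qj pr p E = (1 / p) * (E / real (nN pr))"

definition pi_d :: "params \<Rightarrow> policy \<Rightarrow> real \<Rightarrow> real \<Rightarrow> real" where
  "pi_d pr V X I = (case V of P \<Rightarrow> gG pr * X | S \<Rightarrow> 0) - I"

definition pi_e :: "params \<Rightarrow> policy \<Rightarrow> real \<Rightarrow> real \<Rightarrow> real \<Rightarrow> real" where
  "pi_e pr V E X I = (case V of P \<Rightarrow> gG pr * X | S \<Rightarrow> X / E) + res pr I - I"

definition id_util :: "params \<Rightarrow> real \<Rightarrow> real \<Rightarrow> real \<Rightarrow> real \<Rightarrow> real" where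
  "id_util pr q own pe pd = own + alph pr * (q * pe + (1 - q) * pd)"

text \<open>Type-symmetric investment profile: elite (all in group j), disenfranchised
  in group j, disenfranchised in other groups.\<close>
record inv =
  iE  :: real
  iDj :: real
  iDo :: real

text \<open>Total resources X of the disenfranchised: p N - E of them are in group j,
  (1 - p) N in the other groups.\<close>
definition Xdis :: "params \<Rightarrow> real \<Rightarrow> real \<Rightarrow> inv \<Rightarrow> real" where
  "Xdis pr p E s = (p * real (nN pr) - E) * res pr (iDj s)
                  + ((1 - p) * real (nN pr)) * res pr (iDo s)"

text \<open>Utilities of the three classes of agents, given the policy V, elite size E,
  disenfranchised resources X, the agent's own investment I and the profile s
  (for the payoff of the other type within the agent's group).\<close>
definition U_ej :: "params \<Rightarrow> real \<Rightarrow> policy \<Rightarrow> real \<Rightarrow> real \<Rightarrow> real \<Rightarrow> inv \<Rightarrow> real" where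
  "U_ej pr p V E X I s =
     id_util pr (qj pr p E) (pi_e pr V E X I) (pi_e pr V E X I) (pi_d pr V X (iDj s))"

definition U_dj :: "params \<Rightarrow> real \<Rightarrow> policy \<Rightarrow> real \<Rightarrow> real \<Rightarrow> real \<Rightarrow> inv \<Rightarrow> real" where
  "U_dj pr p V E X I s =
     id_util pr (qj pr p E) (pi_d pr V X I) (pi_e pr V E X (iE s)) (pi_d pr V X I)"

text \<open>Other groups have p_k^elite = 0, hence q_k = 0.\<close>
definition U_do :: "params \<Rightarrow> policy \<Rightarrow> real \<Rightarrow> real \<Rightarrow> real \<Rightarrow> inv \<Rightarrow> real" where
  "U_do pr V E X I s =
     id_util pr 0 (pi_d pr V X I) (pi_e pr V E X (iE s)) (pi_d pr V X I)"

definition decide :: "params \<Rightarrow> real \<Rightarrow> real \<Rightarrow> real \<Rightarrow> inv \<Rightarrow> policy" where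
  "decide pr p E X s =
     (if U_ej pr p P E X (iE s) s \<ge> U_ej pr p S E X (iE s) s then P else S)"

text \<open>Stage 2: Nash equilibrium in investments in the subgame after E,
  with unilateral deviations of a single agent (which change X by the
  deviator's change in resources if disenfranchised) and stage-3 play
  recomputed after the deviation.\<close>
definition stage2_eq :: "params \<Rightarrow> real \<Rightarrow> real \<Rightarrow> inv \<Rightarrow> bool" where
  "stage2_eq pr p E s \<longleftrightarrow>
     iE s \<ge> 0 \<and> iDj s \<ge> 0 \<and> iDo s \<ge> 0 \<and>
     (let X = Xdis pr p E s; V = decide pr p E X s in
       (\<forall>I\<ge>0. U_ej pr p (decide pr p E X s) E X I s \<le> U_ej pr p V E X (iE s) s) \<and>
       (\<forall>I\<ge>0. let X' = X + res pr I - res pr (iDj s) in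
                U_dj pr p (decide pr p E X' s) E X' I s \<le> U_dj pr p V E X (iDj s) s) \<and>
       (\<forall>I\<ge>0. let X' = X + res pr I - res pr (iDo s) in
                U_do pr (decide pr p E X' s) E X' I s \<le> U_do pr V E X (iDo s) s))"

definition outcome :: "params \<Rightarrow> real \<Rightarrow> real \<Rightarrow> inv \<Rightarrow> policy" where
  "outcome pr p E s = decide pr p E (Xdis pr p E s) s"

definition W :: "params \<Rightarrow> real \<Rightarrow> real \<Rightarrow> inv \<Rightarrow> real" where
  "W pr p E s = U_ej pr p (outcome pr p E s) E (Xdis pr p E s) (iE s) s"

definition spne :: "params \<Rightarrow> real \<Rightarrow> real \<Rightarrow> (real \<Rightarrow> inv) \<Rightarrow> bool" where
  "spne pr p Estar strat \<longleftrightarrow>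
     real (eE0 pr) \<le> Estar \<and> Estar \<le> real (nN pr) \<and>
     (\<forall>E. real (eE0 pr) \<le> E \<and> E \<le> real (nN pr) \<longrightarrow> stage2_eq pr p E (strat E)) \<and>
     (\<forall>E. real (eE0 pr) \<le> E \<and> E \<le> real (nN pr) \<longrightarrow> W pr p E (strat E) \<le> W pr p Estar (strat Estar))"

definition eq_policy :: "params \<Rightarrow> real \<Rightarrow> real \<Rightarrow> (real \<Rightarrow> inv) \<Rightarrow> policy" where
  "eq_policy pr p Estar strat = outcome pr p Estar (strat Estar)"

end

theory Submission
  imports Defs "HOL-Real_Asymp.Real_Asymp"
begin

(* Take N = 4, E0 = 2, A = 25/16, M = 1, G = 12/25, alpha = 1/10, f x = x / (1 + x), and the
   shares p = 1/2 < p' = 1. For every franchise E in [2, 4] stage 2 is essentially unique: the elite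
   invests 1/4, the maximiser of A f I - I, and no disenfranchised agent invests, because at most the
   fraction (1 + alpha) G of the resources he adds to X comes back to him, while
   A (1 + alpha) G f I < (1 + alpha (1 - q)) I. Hence X = N - E, and the elite decider chooses P iff
   G (1 + alpha) >= (1 + alpha q) / E, where q = E / (N p) is the elite fraction of group j.
   For p = 1/2 this fails at E = 2, and expropriating the two outsiders beats every franchise large
   enough to trigger P. For p' = 1 the weight q is halved: the elite cares more about the
   disenfranchised members of its own group, chooses P for every E, and keeps E = 2. *)

definition P_advantage :: "params \<Rightarrow> real \<Rightarrow> real \<Rightarrow> real" where
  "P_advantage pr p E = gG pr * (1 + alph pr) - (1 + alph pr * qj pr p E) / E"

lemma U_ej_eq:
  "U_ej pr p V E X I s =
     (1 + alph pr * qj pr p E) * ((case V of P \<Rightarrow> gG pr * X | S \<Rightarrow> X / E) + res pr I - I)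
   + alph pr * (1 - qj pr p E) * ((case V of P \<Rightarrow> gG pr * X | S \<Rightarrow> 0) - iDj s)"
  by (cases V) (simp_all add: U_ej_def id_util_def pi_e_def pi_d_def algebra_simps)

lemma U_ej_investment_diff:
  "U_ej pr p V E X I s - U_ej pr p V E X J s =
     (1 + alph pr * qj pr p E) * ((res pr I - I) - (res pr J - J))"
  unfolding U_ej_eq by (simp add: algebra_simps)

lemma decide_eq: "decide pr p E X s = (if 0 \<le> X * P_advantage pr p E then P else S)"
proof -
  have "U_ej pr p P E X (iE s) s - U_ej pr p S E X (iE s) s = X * P_advantage pr p E"
    by (simp add: U_ej_eq P_advantage_def algebra_simps diff_divide_distrib add_divide_distrib)
  then show ?thesis
    unfolding decide_def by auto
qed

text \<open>What X is worth to a disenfranchised agent who anticipates the stage-3 choice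
  (P iff 0 \<le> X * m).\<close>
definition share :: "real \<Rightarrow> real \<Rightarrow> real \<Rightarrow> real \<Rightarrow> real" where
  "share m a b z = (if 0 \<le> z * m then a * z else b * z)"

lemma share_increment_le:
  assumes "0 \<le> a" "a \<le> L" "0 \<le> b" "b \<le> L" "x \<le> y"
  shows "share m a b y - share m a b x \<le> L * (y - x)"
proof -
  have slopes: "a * (y - x) \<le> L * (y - x)" "b * (y - x) \<le> L * (y - x)"
    using assms by (auto intro: mult_right_mono)
  consider "x \<le> 0" "0 \<le> y" | "0 < x" | "y < 0"
    using assms(5) by linarith
  then show ?thesis
  proof cases
    case 1
    have "share m a b y \<le> L * y" "L * x \<le> share m a b x"
      using 1 assms by (auto simp: share_def intro: mult_right_mono mult_right_mono_neg)
    then show ?thesis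
      by (simp add: algebra_simps)
  next
    case 2
    then have "(0 \<le> y * m) = (0 \<le> x * m)"
      using assms(5) by (auto simp: zero_le_mult_iff)
    then show ?thesis
      using slopes by (auto simp: share_def algebra_simps)
  next
    case 3
    then have "(0 \<le> y * m) = (0 \<le> x * m)"
      using assms(5) by (auto simp: zero_le_mult_iff)
    then show ?thesis
      using slopes by (auto simp: share_def algebra_simps)
  qed
qed

lemma U_dj_decide:
  "U_dj pr p (decide pr p E z s) E z I s =
     share (P_advantage pr p E) ((1 + alph pr) * gG pr) (alph pr * qj pr p E / E) z
   - (1 + alph pr * (1 - qj pr p E)) * I + alph pr * qj pr p E * (res pr (iE s) - iE s)"
  unfolding decide_eq share_def
  by (simp add: U_dj_def id_util_def pi_e_def pi_d_def algebra_simps)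

lemma U_do_decide:
  "U_do pr (decide pr p E z s) E z I s =
     share (P_advantage pr p E) ((1 + alph pr) * gG pr) 0 z - (1 + alph pr) * I"
  unfolding decide_eq share_def
  by (simp add: U_do_def id_util_def pi_e_def pi_d_def algebra_simps)

text \<open>A disenfranchised agent's investment problem: g is his value of X, r turns investment
  into resources and k is his utility cost per unit invested.\<close>
lemma zero_unique_best_response:
  fixes g r :: "real \<Rightarrow> real"
  assumes g_incr: "\<And>x y. x \<le> y \<Longrightarrow> g y - g x \<le> L * (y - x)"
    and r_mono: "\<And>I. 0 \<le> I \<Longrightarrow> r 0 \<le> r I"
    and unprofitable: "\<And>I. 0 < I \<Longrightarrow> L * (r I - r 0) < k * I"
    and "0 \<le> I0"
  shows "(\<forall>I\<ge>0. g (X + r I - r I0) - k * I \<le> g X - k * I0) \<longleftrightarrow> I0 = 0"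
proof
  assume best: "\<forall>I\<ge>0. g (X + r I - r I0) - k * I \<le> g X - k * I0"
  show "I0 = 0"
  proof (rule ccontr)
    assume "I0 \<noteq> 0"
    with \<open>0 \<le> I0\<close> have "0 < I0" by simp
    have "k * I0 \<le> g X - g (X - (r I0 - r 0))"
      using best[rule_format, of 0] by (simp add: algebra_simps)
    also have "\<dots> \<le> L * (r I0 - r 0)"
      using g_incr[of "X - (r I0 - r 0)" X] r_mono[OF \<open>0 \<le> I0\<close>] by simp
    also have "\<dots> < k * I0"
      using unprofitable[OF \<open>0 < I0\<close>] .
    finally show False by simp
  qed
next
  assume "I0 = 0"
  have "g (X + r I - r 0) - g X \<le> k * I" if "0 \<le> I" for I
  proof (cases "I = 0")
    case False
    then have "g (X + (r I - r 0)) - g X \<le> L * (r I - r 0)"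
      using g_incr[of X "X + (r I - r 0)"] r_mono[OF that] by simp
    then show ?thesis
      using unprofitable[of I] that False by (simp add: add_diff_eq)
  qed simp
  then show "\<forall>I\<ge>0. g (X + r I - r I0) - k * I \<le> g X - k * I0"
    using \<open>I0 = 0\<close> by (simp add: algebra_simps)
qed

lemma stage2_eq_iff:
  assumes valid: "valid_params pr" and "0 < p" "0 < E"
    and slope: "alph pr * qj pr p E / E \<le> (1 + alph pr) * gG pr"
    and dj_unprofitable: "\<And>I. 0 < I \<Longrightarrow>
      (1 + alph pr) * gG pr * (res pr I - res pr 0) < (1 + alph pr * (1 - qj pr p E)) * I"
    and do_unprofitable: "\<And>I. 0 < I \<Longrightarrow> gG pr * (res pr I - res pr 0) < I"
  shows "stage2_eq pr p E s \<longleftrightarrow>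
    0 \<le> iE s \<and> (\<forall>I\<ge>0. res pr I - I \<le> res pr (iE s) - iE s) \<and> iDj s = 0 \<and> iDo s = 0"
proof -
  define X where "X = Xdis pr p E s"
  define g where "g = share (P_advantage pr p E) ((1 + alph pr) * gG pr)"
  define L where "L = (1 + alph pr) * gG pr"
  have "0 \<le> 1 / real (nN pr)"
    by simp
  then have pos: "0 < alph pr" "0 < gG pr" "0 < aA pr"
    using valid unfolding valid_params_def by linarith+
  have "0 \<le> qj pr p E"
    using \<open>0 < p\<close> \<open>0 < E\<close> by (simp add: qj_def)
  then have elite_weight: "0 < 1 + alph pr * qj pr p E"
    using pos by (simp add: add_pos_nonneg)
  have res_mono: "res pr 0 \<le> res pr I" if "0 \<le> I" for I
    using valid that pos by (cases "I = 0") (auto simp: valid_params_def res_def)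
  have g_incr: "g b y - g b x \<le> L * (y - x)" if "0 \<le> b" "b \<le> L" "x \<le> y" for b x y
    using that pos unfolding g_def L_def by (intro share_increment_le) auto
  have elite: "(\<forall>I\<ge>0. U_ej pr p V E X I s \<le> U_ej pr p V E X (iE s) s)
      \<longleftrightarrow> (\<forall>I\<ge>0. res pr I - I \<le> res pr (iE s) - iE s)" for V
    using U_ej_investment_diff[of pr p V E X _ s "iE s"] elite_weight
    by (smt (verit) mult_le_0_iff)
  have dj: "(\<forall>I\<ge>0. g (alph pr * qj pr p E / E) (X + res pr I - res pr (iDj s))
                 - (1 + alph pr * (1 - qj pr p E)) * I
              \<le> g (alph pr * qj pr p E / E) X - (1 + alph pr * (1 - qj pr p E)) * iDj s)
      \<longleftrightarrow> iDj s = 0" if "0 \<le> iDj s"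
    using g_incr slope dj_unprofitable \<open>0 \<le> qj pr p E\<close> pos \<open>0 < E\<close> that
    by (intro zero_unique_best_response) (auto simp: L_def res_mono)
  have do: "(\<forall>I\<ge>0. g 0 (X + res pr I - res pr (iDo s)) - (1 + alph pr) * I
              \<le> g 0 X - (1 + alph pr) * iDo s)
      \<longleftrightarrow> iDo s = 0" if "0 \<le> iDo s"
  proof (intro zero_unique_best_response)
    show "L * (res pr I - res pr 0) < (1 + alph pr) * I" if "0 < I" for I
      using do_unprofitable[OF that] pos unfolding L_def by simp
  qed (use g_incr pos that res_mono in \<open>auto simp: L_def\<close>)
  show ?thesis
    unfolding stage2_eq_def Let_def X_def[symmetric] U_dj_decide U_do_decide g_def[symmetric]
    using elite dj do by auto
qed

lemma Xdis_no_investment: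
  "fprod pr 0 = 0 \<Longrightarrow> iDj s = 0 \<Longrightarrow> iDo s = 0 \<Longrightarrow> Xdis pr p E s = mM pr * (real (nN pr) - E)"
  by (simp add: Xdis_def res_def algebra_simps)

lemma outcome_W_cong:
  assumes "iDj s = iDj s'" "iDo s = iDo s'" "res pr (iE s) - iE s = res pr (iE s') - iE s'"
  shows "outcome pr p E s = outcome pr p E s'" "W pr p E s = W pr p E s'"
proof -
  have X: "Xdis pr p E s = Xdis pr p E s'"
    using assms by (simp add: Xdis_def)
  show "outcome pr p E s = outcome pr p E s'"
    unfolding outcome_def decide_eq X ..
  moreover have "res pr (iE s) = res pr (iE s') - iE s' + iE s"
    using assms(3) by simp
  ultimately show "W pr p E s = W pr p E s'"
    using assms(1) unfolding W_def U_ej_eq X by simp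
qed

lemma spne_constI:
  assumes "\<And>E. real (eE0 pr) \<le> E \<Longrightarrow> E \<le> real (nN pr) \<Longrightarrow> stage2_eq pr p E s"
    and "real (eE0 pr) \<le> Es" "Es \<le> real (nN pr)"
    and "\<And>E. real (eE0 pr) \<le> E \<Longrightarrow> E \<le> real (nN pr) \<Longrightarrow> W pr p E s \<le> W pr p Es s"
  shows "spne pr p Es (\<lambda>_. s)"
  using assms by (simp add: spne_def)

lemma spne_determined_stage2:
  assumes determined: "\<And>E s. real (eE0 pr) \<le> E \<Longrightarrow> E \<le> real (nN pr) \<Longrightarrow> stage2_eq pr p E s \<Longrightarrow>
      outcome pr p E s = outcome pr p E s0 \<and> W pr p E s = W pr p E s0"
    and spne: "spne pr p Es sg"
  shows "eq_policy pr p Es sg = outcome pr p Es s0"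
    and "\<And>E. real (eE0 pr) \<le> E \<Longrightarrow> E \<le> real (nN pr) \<Longrightarrow> W pr p E s0 \<le> W pr p Es s0"
  using spne determined unfolding spne_def eq_policy_def by metis+


definition saturating :: "real \<Rightarrow> real" where
  "saturating x = x / (1 + x)"

definition example_params :: params where
  "example_params =
     \<lparr>nN = 4, aA = 25/16, mM = 1, gG = 12/25, eE0 = 2, alph = 1/10, fprod = saturating\<rparr>"

definition example_profile :: inv where
  "example_profile = \<lparr>iE = 1/4, iDj = 0, iDo = 0\<rparr>"

lemma example_params_simps [simp]:
  "nN example_params = 4" "aA example_params = 25/16" "mM example_params = 1"
  "gG example_params = 12/25" "eE0 example_params = 2" "alph example_params = 1/10"
  "fprod example_params = saturating"
  by (simp_all add: example_params_def)

lemma example_profile_simps [simp]: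
  "iE example_profile = 1/4" "iDj example_profile = 0" "iDo example_profile = 0"
  by (simp_all add: example_profile_def)

lemma saturating_deriv:
  "x \<ge> 0 \<Longrightarrow> (saturating has_real_derivative 1 / (1 + x)\<^sup>2) (at x)"
  unfolding saturating_def
  by (rule derivative_eq_intros refl | simp)+ (simp add: field_simps power2_eq_square)

lemma saturating_concave: "concave_on {0..} saturating"
  unfolding concave_on_def
proof (rule convex_on_realI[where f' = "\<lambda>x. - (1 / (1 + x)\<^sup>2)"])
  fix x :: real
  assume "x \<in> {0..}"
  then show "((\<lambda>x. - saturating x) has_real_derivative - (1 / (1 + x)\<^sup>2)) (at x)"
    using saturating_deriv by (auto intro: derivative_eq_intros)
next
  fix x y :: real
  assume "x \<in> {0..}" "y \<in> {0..}" "x \<le> y"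
  then show "- (1 / (1 + x)\<^sup>2) \<le> - (1 / (1 + y)\<^sup>2)"
    by (auto intro!: divide_left_mono power_mono)
qed simp

lemma saturating_le: "0 \<le> x \<Longrightarrow> saturating x \<le> x"
  by (simp add: saturating_def field_simps)

lemma valid_example_params: "valid_params example_params"
proof -
  have "((\<lambda>x::real. 1 / (1 + x)\<^sup>2) \<longlongrightarrow> 0) at_top"
    by real_asymp
  moreover have "\<forall>x\<ge>0. (saturating has_real_derivative 1 / (1 + x)\<^sup>2) (at x within {0..})"
    using saturating_deriv has_field_derivative_at_within by blast
  ultimately show ?thesis
    unfolding valid_params_def using saturating_concave
    by (auto simp: saturating_def field_simps intro!: exI[of _ "\<lambda>x. 1 / (1 + x)\<^sup>2"])
qed

lemma example_res: "res example_params x = 25/16 * saturating x + 1"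
  by (simp add: res_def)

lemma example_net_res_le: "0 \<le> x \<Longrightarrow> res example_params x - x \<le> 17/16"
proof -
  assume "0 \<le> x"
  have "25/16 * saturating x \<le> 1/16 + x"
    unfolding saturating_def using \<open>0 \<le> x\<close> zero_le_power2[of "4 * x - 1"]
    by (simp add: pos_divide_le_eq power2_eq_square algebra_simps)
  then show ?thesis
    by (simp add: example_res)
qed

lemma example_net_res_max: "res example_params (1/4) - 1/4 = 17/16"
  by (simp add: example_res saturating_def)

lemma example_net_res_argmax_iff:
  assumes "0 \<le> J"
  shows "(\<forall>I\<ge>0. res example_params I - I \<le> res example_params J - J)
    \<longleftrightarrow> res example_params J - J = 17/16"
  using example_net_res_le[OF assms] example_net_res_le example_net_res_max
  by (metis order_antisym_conv zero_le_divide_iff zero_le_one zero_le_numeral)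

lemma example_qj: "qj example_params p E = E / (4 * p)"
  by (simp add: qj_def)

lemma example_stage2_eq_iff:
  assumes "1/2 \<le> p" "p \<le> 1" "2 \<le> E" "E \<le> 4"
  shows "stage2_eq example_params p E s \<longleftrightarrow>
    0 \<le> iE s \<and> res example_params (iE s) - iE s = 17/16 \<and> iDj s = 0 \<and> iDo s = 0"
proof -
  have q_le: "qj example_params p E \<le> 2"
    using assms by (simp add: example_qj field_simps)
  have res_gain: "res example_params I - res example_params 0 = 25/16 * saturating I" for I
    by (simp add: example_res saturating_def)
  have "stage2_eq example_params p E s \<longleftrightarrow> 0 \<le> iE s \<and>
      (\<forall>I\<ge>0. res example_params I - I \<le> res example_params (iE s) - iE s) \<and> iDj s = 0 \<and> iDo s = 0"
  proof (rule stage2_eq_iff[OF valid_example_params])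
    show "0 < p" "0 < E"
      using assms by auto
    show "alph example_params * qj example_params p E / E
        \<le> (1 + alph example_params) * gG example_params"
      using assms by (simp add: example_qj field_simps)
  next
    fix I :: real
    assume "0 < I"
    have "saturating I \<le> I"
      using \<open>0 < I\<close> by (simp add: saturating_le)
    moreover have "9/10 * I \<le> (1 + alph example_params * (1 - qj example_params p E)) * I"
      using \<open>0 < I\<close> q_le by (intro mult_right_mono) (auto simp: field_simps)
    moreover have "(1 + alph example_params) * gG example_params *
        (res example_params I - res example_params 0) = 33/40 * saturating I"
      and "gG example_params * (res example_params I - res example_params 0) = 3/4 * saturating I"
      by (simp_all add: res_gain)
    ultimately show "(1 + alph example_params) * gG example_params *
          (res example_params I - res example_params 0)
        < (1 + alph example_params * (1 - qj example_params p E)) * I"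
      and "gG example_params * (res example_params I - res example_params 0) < I"
      using \<open>0 < I\<close> by linarith+
  qed
  also have "\<dots> \<longleftrightarrow>
      0 \<le> iE s \<and> res example_params (iE s) - iE s = 17/16 \<and> iDj s = 0 \<and> iDo s = 0"
    using example_net_res_argmax_iff by blast
  finally show ?thesis .
qed

lemma example_stage2_determined:
  assumes "1/2 \<le> p" "p \<le> 1" "2 \<le> E" "E \<le> 4" "stage2_eq example_params p E s"
  shows "outcome example_params p E s = outcome example_params p E example_profile \<and>
    W example_params p E s = W example_params p E example_profile"
  using assms example_stage2_eq_iff[OF assms(1-4)] example_net_res_max
  by (simp add: outcome_W_cong)

lemma example_profile_stage2_eq:
  "1/2 \<le> p \<Longrightarrow> p \<le> 1 \<Longrightarrow> 2 \<le> E \<Longrightarrow> E \<le> 4 \<Longrightarrow> stage2_eq example_params p E example_profile"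
  using example_stage2_eq_iff example_net_res_max by simp

lemma example_Xdis: "Xdis example_params p E example_profile = 4 - E"
  by (simp add: Xdis_no_investment saturating_def)

lemma example_outcome:
  "outcome example_params p E example_profile =
     (if 0 \<le> (4 - E) * P_advantage example_params p E then P else S)"
  by (simp add: outcome_def decide_eq example_Xdis)

lemma example_W:
  "W example_params p E example_profile =
     (case outcome example_params p E example_profile of
        P \<Rightarrow> 66/125 * (4 - E) + (1 + qj example_params p E / 10) * 17/16
      | S \<Rightarrow> (1 + qj example_params p E / 10) * ((4 - E) / E + 17/16))"
proof -
  have res: "res example_params (1/4) = 21/16"
    by (simp add: example_res saturating_def)
  show ?thesis
    unfolding W_def U_ej_eq example_Xdis example_profile_simps res
    by (cases "outcome example_params p E example_profile") (simp_all add: field_simps)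
qed

lemma example_half_initial: "outcome example_params (1/2) 2 example_profile = S"
  by (simp add: example_outcome P_advantage_def example_qj)

lemma example_half_W_initial: "W example_params (1/2) 2 example_profile = 363/160"
  by (simp add: example_W example_half_initial example_qj)

lemma example_half_W_le:
  assumes "2 \<le> E" "E \<le> 4"
  shows "W example_params (1/2) E example_profile \<le> W example_params (1/2) 2 example_profile"
    and "outcome example_params (1/2) E example_profile = P \<Longrightarrow>
      W example_params (1/2) E example_profile < W example_params (1/2) 2 example_profile"
  unfolding example_half_W_initial
proof -
  have q: "qj example_params (1/2) E = E / 2"
    by (simp add: example_qj)
  have P_lt: "W example_params (1/2) E example_profile < 363/160"
    if P: "outcome example_params (1/2) E example_profile = P"
  proof -
    have "500/239 \<le> E"
    proof (cases "E = 4")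
      case False
      have "P_advantage example_params (1/2) E = 239/500 - 1/E"
        using assms by (simp add: P_advantage_def q field_simps)
      then have "0 \<le> 239/500 - 1/E"
        using P False assms by (auto simp: example_outcome zero_le_mult_iff split: if_splits)
      then show ?thesis
        using assms by (simp add: field_simps)
    qed simp
    then show ?thesis
      using P by (simp add: example_W q field_simps)
  qed
  have S_le: "W example_params (1/2) E example_profile \<le> 363/160"
    if S: "outcome example_params (1/2) E example_profile = S"
  proof -
    have "0 \<le> (E - 2) * (640 - E)"
      using assms by simp
    then show ?thesis
      using S assms by (simp add: example_W q field_simps algebra_simps)
  qed
  show "outcome example_params (1/2) E example_profile = P \<Longrightarrow>
      W example_params (1/2) E example_profile < 363/160"
    by (rule P_lt)
  show "W example_params (1/2) E example_profile \<le> 363/160"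
    using P_lt S_le by (cases "outcome example_params (1/2) E example_profile") force+
qed

lemma example_one_outcome:
  assumes "2 \<le> E" "E \<le> 4"
  shows "outcome example_params 1 E example_profile = P"
proof -
  have "P_advantage example_params 1 E = 503/1000 - 1/E"
    using assms by (simp add: P_advantage_def example_qj field_simps)
  moreover have "1/E \<le> 1/2"
    using assms by (simp add: field_simps)
  ultimately have "0 \<le> (4 - E) * P_advantage example_params 1 E"
    using assms by (intro mult_nonneg_nonneg) linarith+
  then show ?thesis
    by (simp add: example_outcome)
qed

lemma example_one_W_le:
  "2 \<le> E \<Longrightarrow> E \<le> 4 \<Longrightarrow> W example_params 1 E example_profile \<le> W example_params 1 2 example_profile"
  by (simp add: example_W example_one_outcome example_qj field_simps)

lemma example_spne:
  assumes "1/2 \<le> p" "p \<le> 1" "spne example_params p Es sg"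
  shows "eq_policy example_params p Es sg = outcome example_params p Es example_profile"
    and "2 \<le> Es" "Es \<le> 4"
    and "\<And>E. 2 \<le> E \<Longrightarrow> E \<le> 4 \<Longrightarrow>
      W example_params p E example_profile \<le> W example_params p Es example_profile"
proof -
  have "outcome example_params p E s = outcome example_params p E example_profile \<and>
      W example_params p E s = W example_params p E example_profile"
    if "real (eE0 example_params) \<le> E" "E \<le> real (nN example_params)"
      "stage2_eq example_params p E s" for E s
    using example_stage2_determined assms(1,2) that by simp
  note determined = spne_determined_stage2[OF this assms(3)]
  show "eq_policy example_params p Es sg = outcome example_params p Es example_profile"
    by (rule determined(1))
  show "\<And>E. 2 \<le> E \<Longrightarrow> E \<le> 4 \<Longrightarrow>
      W example_params p E example_profile \<le> W example_params p Es example_profile"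
    using determined(2) by simp
  show "2 \<le> Es" "Es \<le> 4"
    using assms(3) by (simp_all add: spne_def)
qed

theorem proposition3:
  shows "\<exists>pr p p'. valid_params pr \<and>
           0 < p \<and> p < p' \<and> p' \<le> 1 \<and>
           real (eE0 pr) \<le> p * real (nN pr) \<and>
           p * real (nN pr) \<in> \<nat> \<and> p' * real (nN pr) \<in> \<nat> \<and>
           (\<exists>Es sg. spne pr p Es sg) \<and>
           (\<forall>Es sg. spne pr p Es sg \<longrightarrow> eq_policy pr p Es sg = S) \<and>
           (\<exists>Es sg. spne pr p' Es sg) \<and>
           (\<forall>Es sg. spne pr p' Es sg \<longrightarrow> eq_policy pr p' Es sg = P)"
proof -
  let ?pr = example_params and ?s = example_profile
  have half_spne: "spne ?pr (1/2) 2 (\<lambda>_. ?s)"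
    by (rule spne_constI) (simp_all add: example_profile_stage2_eq example_half_W_le(1))
  have half_policy: "eq_policy ?pr (1/2) Es sg = S" if "spne ?pr (1/2) Es sg" for Es sg
  proof (rule ccontr)
    note spne = example_spne[of "1/2", OF _ _ that, simplified]
    assume "eq_policy ?pr (1/2) Es sg \<noteq> S"
    then have "outcome ?pr (1/2) Es ?s = P"
      using spne(1) by (cases "outcome ?pr (1/2) Es ?s") auto
    then show False
      using example_half_W_le(2)[OF spne(2,3)] spne(4)[of 2] by simp
  qed
  have one_spne: "spne ?pr 1 2 (\<lambda>_. ?s)"
    by (rule spne_constI) (simp_all add: example_profile_stage2_eq example_one_W_le)
  have one_policy: "eq_policy ?pr 1 Es sg = P" if "spne ?pr 1 Es sg" for Es sg
    using example_spne[of 1, OF _ _ that] by (simp add: example_one_outcome)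
  show ?thesis
    using valid_example_params half_spne half_policy one_spne one_policy
    by (intro exI[of _ ?pr] exI[of _ "1/2"] exI[of _ 1]) auto
qed

end
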